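(* Let $f:2^N\to\mathbb R$ be monotone with $f(\emptyset)\ge0$, $|N|=n$ with $\sqrt n$ integer, and let $p$ be a polynomial and $\epsilon\ge f(N)/p(n)$. Given a sufficiently large polynomial number of samples $(S_j,f(S_j))$ with $S_j$ i.i.d. from $\mathcal D^{sub}$, with probability at least $1-O(e^{-n})$ the estimates $\hat v_i=\frac{1}{|\mathcal S_{i,\sqrt n+1}|}\sum_{S\in\mathcal S_{i,\sqrt n+1}}f(S)-\frac{1}{|\mathcal S_{-i,\sqrt n}|}\sum_{S\in\mathcal S_{-i,\sqrt n}}f(S)$ satisfy, for all $e_i\in N$, $\big|\hat v_i-\mathbb E_{S\sim\mathcal D_{\sqrt n}\mid e_i\notin S}[f_S(e_i)]\big|\le\epsilon$.
   Context: $N=\{e_1,\dots,e_n\}$, $f_S(e)=f(S\cup\{e\})-f(S)$. $\mathcal D_j$ is the uniform distribution over subsets of $N$ of size $j$; $\mathcal D^{sub}$ draws from $\mathcal D_k$, $\mathcal D_{\sqrt n}$, $\mathcal D_{\sqrt n+1}$ with probability $1/3$ each, for some $1\le k\le n$. $\mathcal S_{i,j}$ (resp. $\mathcal S_{-i,j}$) is the collection of samples of size $j$ containing (resp. not containing) $e_i$. *)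

theory Defs
  imports "HOL-Probability.Probability" "HOL-Computational_Algebra.Polynomial"
begin

text \<open>Ground set N = {0..<n}; element e_i is i.\<close>

definition marg :: "(nat set \<Rightarrow> real) \<Rightarrow> nat set \<Rightarrow> nat \<Rightarrow> real" where
  "marg f S e = f (S \<union> {e}) - f S"

definition Dunif :: "nat \<Rightarrow> nat \<Rightarrow> nat set pmf" where
  "Dunif n j = pmf_of_set {S. S \<subseteq> {..<n} \<and> card S = j}"

text \<open>D^sub: D_k, D_s, D_(s+1) with probability 1/3 each (s = sqrt n).\<close>
definition Dsub :: "nat \<Rightarrow> nat \<Rightarrow> nat \<Rightarrow> nat set pmf" where
  "Dsub n k s = bind_pmf (pmf_of_set {0,1,2::nat})
     (\<lambda>r. if r = 0 then Dunif n k else if r = 1 then Dunif n s else Dunif n (s+1))"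

definition Sin :: "(nat \<Rightarrow> nat set) \<Rightarrow> nat \<Rightarrow> nat \<Rightarrow> nat \<Rightarrow> nat set" where
  "Sin smp m i j = {t. t < m \<and> i \<in> smp t \<and> card (smp t) = j}"
definition Sout :: "(nat \<Rightarrow> nat set) \<Rightarrow> nat \<Rightarrow> nat \<Rightarrow> nat \<Rightarrow> nat set" where
  "Sout smp m i j = {t. t < m \<and> i \<notin> smp t \<and> card (smp t) = j}"

text \<open>The estimate v_i from m samples smp 0..m-1 (empirical averages, samples counted with multiplicity).\<close>
definition vhat :: "(nat set \<Rightarrow> real) \<Rightarrow> (nat \<Rightarrow> nat set) \<Rightarrow> nat \<Rightarrow> nat \<Rightarrow> nat \<Rightarrow> real" where
  "vhat f smp m s i =
     (\<Sum>t\<in>Sin smp m i (s+1). f (smp t)) / real (card (Sin smp m i (s+1)))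
   - (\<Sum>t\<in>Sout smp m i s. f (smp t)) / real (card (Sout smp m i s))"

definition cond_marg :: "(nat set \<Rightarrow> real) \<Rightarrow> nat \<Rightarrow> nat \<Rightarrow> nat \<Rightarrow> real" where
  "cond_marg f n s i =
     (let A = {S. S \<subseteq> {..<n} \<and> card S = s \<and> i \<notin> S}
      in (\<Sum>S\<in>A. marg f S i) / real (card A))"

end

theory Submission
  imports Defs
begin

text \<open>Each estimate is the difference of two empirical averages: over the samples of size
  \<open>\<surd>n + 1\<close> containing \<open>e\<^sub>i\<close>, and over those of size \<open>\<surd>n\<close> avoiding \<open>e\<^sub>i\<close>. Conditioned on
  a class, a sample is uniform on it, and \<open>S \<mapsto> S \<union> {e\<^sub>i}\<close> is a bijection between the two
  classes, so the two class means differ exactly by the conditional expected marginal.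
  Each class has probability at least \<open>1/(3n)\<close> under the sampling distribution and
  \<open>0 \<le> f \<le> f(N)\<close> by monotonicity, so Hoeffding's inequality, applied to the class count and to the
  centred class sum, makes each class average \<open>\<epsilon>/2\<close>-accurate except with probability
  \<open>4 exp(-2n)\<close> once \<open>m \<ge> 144 n\<^sup>3 (2 p(n) + 1)\<^sup>2\<close>. A union bound over the \<open>2n\<close> classes leaves a
  failure probability of at most \<open>8n exp(-2n) \<le> 8 exp(-n)\<close>.\<close>

definition average :: "'a set \<Rightarrow> ('a \<Rightarrow> real) \<Rightarrow> real" where
  "average A g = (\<Sum>a\<in>A. g a) / real (card A)"

definition hits :: "(nat \<Rightarrow> 'a) \<Rightarrow> nat \<Rightarrow> ('a \<Rightarrow> bool) \<Rightarrow> nat set" where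
  "hits x m c = {t. t < m \<and> c (x t)}"

lemma average_mem_atLeastAtMost:
  assumes "finite A" "A \<noteq> {}" "\<forall>a\<in>A. g a \<in> {l..u}"
  shows "average A g \<in> {l..u}"
proof -
  have c: "real (card A) > 0" using assms by (simp add: card_gt_0_iff)
  have "real (card A) * l \<le> (\<Sum>a\<in>A. g a)" "(\<Sum>a\<in>A. g a) \<le> real (card A) * u"
    using sum_mono[of A "\<lambda>_. l" g] sum_mono[of A g "\<lambda>_. u"] assms by auto
  then show ?thesis using c by (auto simp: average_def field_simps)
qed

(* No hypotheses are needed: for empty or infinite A both the sum and the average are 0. *)
lemma sum_diff_average: "(\<Sum>a\<in>A. g a - average A g) = 0"
  by (cases "card A = 0") (auto simp: average_def sum_subtractf card_eq_0_iff)

lemma average_close_of_sum_close: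
  fixes S N \<mu> \<epsilon> a :: real
  assumes "0 < a" "a < N" "\<bar>S - N * \<mu>\<bar> < \<epsilon> * a"
  shows "\<bar>S / N - \<mu>\<bar> < \<epsilon>"
proof -
  have "0 < \<epsilon> * a" using assms(3) abs_ge_zero[of "S - N * \<mu>"] by linarith
  then have "\<epsilon> > 0" using assms(1) by (simp add: zero_less_mult_iff)
  have "\<bar>S / N - \<mu>\<bar> = \<bar>S - N * \<mu>\<bar> / N" using assms by (simp add: field_simps)
  also have "\<dots> < \<epsilon> * a / N" using assms by (simp add: divide_strict_right_mono)
  also have "\<dots> \<le> \<epsilon>" using assms \<open>\<epsilon> > 0\<close> by (simp add: field_simps)
  finally show ?thesis .
qed

lemma sum_if_eq_sum_hits: "(\<Sum>t<m. if c (x t) then g (x t) else 0) = (\<Sum>t\<in>hits x m c. g (x t))"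
proof -
  have "(\<Sum>t<m. if c (x t) then g (x t) else 0) = (\<Sum>t\<in>{t\<in>{..<m}. c (x t)}. g (x t))"
    by (rule sum.inter_filter[symmetric]) simp
  also have "{t\<in>{..<m}. c (x t)} = hits x m c" by (auto simp: hits_def)
  finally show ?thesis .
qed

lemma Pi_pmf_Hoeffding_abs:
  fixes D :: "'a pmf" and g :: "'a \<Rightarrow> real"
  assumes "m > 0" "a < b" "\<forall>x\<in>set_pmf D. g x \<in> {a..b}" "\<delta> \<ge> 0"
  shows "measure_pmf.prob (Pi_pmf {..<m} dd (\<lambda>_. D))
           {x. \<bar>(\<Sum>t<m. g (x t)) - real m * measure_pmf.expectation D g\<bar> \<ge> \<delta>}
         \<le> 2 * exp (-2 * \<delta>\<^sup>2 / (real m * (b - a)\<^sup>2))"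
proof -
  define P where "P = Pi_pmf {..<m} dd (\<lambda>_. D)"
  have component: "map_pmf (\<lambda>x. x t) P = D" if "t < m" for t
    unfolding P_def using that by (subst Pi_pmf_component) auto
  have mean: "measure_pmf.expectation P (\<lambda>x. g (x t)) = measure_pmf.expectation D g"
    if "t < m" for t
    using component[OF that] by (metis integral_map_pmf)
  interpret H: Hoeffding_ineq "measure_pmf P" "{..<m}" "\<lambda>t x. g (x t)" "\<lambda>_. a" "\<lambda>_. b"
     "(\<Sum>t<m. measure_pmf.expectation P (\<lambda>x. g (x t)))"
  proof unfold_locales
    show "prob_space.indep_vars (measure_pmf P) (\<lambda>_. borel) (\<lambda>t x. g (x t)) {..<m}"
      unfolding P_def
      by (intro prob_space.indep_vars_compose2[OF _ indep_vars_Pi_pmf])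
         (auto simp: measure_pmf.prob_space_axioms)
  next
    fix t assume "t \<in> {..<m}"
    then have "AE y in measure_pmf (map_pmf (\<lambda>x. x t) P). g y \<in> {a..b}"
      using component[of t] assms(3) by (simp add: AE_measure_pmf_iff)
    then show "AE x in measure_pmf P. g (x t) \<in> {a..b}"
      by (simp add: AE_measure_pmf_iff)
  qed auto
  have "(\<Sum>t<m. measure_pmf.expectation P (\<lambda>x. g (x t))) = real m * measure_pmf.expectation D g"
    using mean by simp
  moreover have "(\<Sum>i\<in>{..<m}. (b - a)\<^sup>2) > 0" using assms by simp
  ultimately show ?thesis
    using H.Hoeffding_ineq_abs_ge[OF assms(4)] unfolding P_def by simp
qed

text \<open>Hoeffding is applied to the class count and to the centred sum; when both are close to
  their means, the count exceeds \<open>m\<pi>/2\<close> and the class average is \<open>\<epsilon>\<close>-close to \<open>\<mu>\<close>.\<close>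

lemma average_hits_concentration:
  fixes D :: "'a pmf" and c :: "'a \<Rightarrow> bool" and f :: "'a \<Rightarrow> real"
  assumes m: "m > 0" and \<pi>: "\<pi> > 0" and \<epsilon>: "0 < \<epsilon>" "\<epsilon> \<le> R"
    and range: "\<forall>S\<in>set_pmf D. c S \<longrightarrow> \<bar>f S - \<mu>\<bar> \<le> R"
    and freq: "measure_pmf.expectation D (\<lambda>S. if c S then 1 else 0) \<ge> \<pi>"
    and centred: "measure_pmf.expectation D (\<lambda>S. if c S then f S - \<mu> else 0) = 0"
  shows "measure_pmf.prob (Pi_pmf {..<m} dd (\<lambda>_. D))
           {x. \<bar>average (hits x m c) (\<lambda>t. f (x t)) - \<mu>\<bar> > \<epsilon>}
         \<le> 4 * exp (- real m * (\<epsilon> * \<pi> / R)\<^sup>2 / 8)"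
proof -
  define P where "P = Pi_pmf {..<m} dd (\<lambda>_. D)"
  define Z where "Z = (\<lambda>S. if c S then 1 else 0 :: real)"
  define W where "W = (\<lambda>S. if c S then f S - \<mu> else 0)"
  define BZ where "BZ = {x. \<bar>(\<Sum>t<m. Z (x t)) - real m * measure_pmf.expectation D Z\<bar> \<ge> real m * \<pi> / 2}"
  define BW where "BW = {x. \<bar>(\<Sum>t<m. W (x t)) - real m * measure_pmf.expectation D W\<bar> \<ge> \<epsilon> * (real m * \<pi> / 2)}"
  have R: "R > 0" using \<epsilon> by simp
  have hZ: "measure_pmf.prob P BZ \<le> 2 * exp (-2 * (real m * \<pi> / 2)\<^sup>2 / (real m * (1 - 0)\<^sup>2))"
    unfolding BZ_def P_def by (rule Pi_pmf_Hoeffding_abs) (use m \<pi> in \<open>auto simp: Z_def\<close>)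
  have hW: "measure_pmf.prob P BW \<le> 2 * exp (-2 * (\<epsilon> * (real m * \<pi> / 2))\<^sup>2 / (real m * (R - - R)\<^sup>2))"
    unfolding BW_def P_def by (rule Pi_pmf_Hoeffding_abs) (use m \<pi> \<epsilon> R range in \<open>auto simp: W_def\<close>)
  have bad: "{x. \<bar>average (hits x m c) (\<lambda>t. f (x t)) - \<mu>\<bar> > \<epsilon>} \<subseteq> BZ \<union> BW"
  proof (rule subsetI, rule ccontr)
    fix x assume x: "x \<in> {x. \<bar>average (hits x m c) (\<lambda>t. f (x t)) - \<mu>\<bar> > \<epsilon>}" "x \<notin> BZ \<union> BW"
    define G where "G = hits x m c"
    have count: "(\<Sum>t<m. Z (x t)) = real (card G)"
      using sum_if_eq_sum_hits[where g = "\<lambda>_. 1 :: real"] by (simp add: Z_def G_def)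
    have sum: "(\<Sum>t<m. W (x t)) = (\<Sum>t\<in>G. f (x t)) - real (card G) * \<mu>"
      using sum_if_eq_sum_hits[where g = "\<lambda>S. f S - \<mu>"] by (simp add: W_def G_def sum_subtractf)
    have "real m * \<pi> \<le> real m * measure_pmf.expectation D Z"
      using freq by (simp add: Z_def mult_left_mono)
    moreover have "\<bar>(\<Sum>t<m. Z (x t)) - real m * measure_pmf.expectation D Z\<bar> < real m * \<pi> / 2"
      using x(2) by (auto simp: BZ_def)
    ultimately have "real m * \<pi> / 2 < real (card G)" unfolding count by linarith
    moreover have "\<bar>(\<Sum>t\<in>G. f (x t)) - real (card G) * \<mu>\<bar> < \<epsilon> * (real m * \<pi> / 2)"
      using x(2) centred by (auto simp: BW_def sum W_def[symmetric])
    ultimately have "\<bar>average G (\<lambda>t. f (x t)) - \<mu>\<bar> < \<epsilon>"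
      unfolding average_def using average_close_of_sum_close[of "real m * \<pi> / 2"] m \<pi> by simp
    with x(1) show False by (simp add: G_def)
  qed
  have union: "measure_pmf.prob P {x. \<bar>average (hits x m c) (\<lambda>t. f (x t)) - \<mu>\<bar> > \<epsilon>}
          \<le> measure_pmf.prob P BZ + measure_pmf.prob P BW"
    by (rule order_trans[OF measure_pmf.finite_measure_mono[OF bad] measure_Un_le]) auto
  have eZ: "exp (-2 * (real m * \<pi> / 2)\<^sup>2 / (real m * (1 - 0)\<^sup>2)) \<le> exp (- real m * (\<epsilon> * \<pi> / R)\<^sup>2 / 8)"
  proof -
    have "(\<epsilon> / R)\<^sup>2 \<le> 4" using \<epsilon> R by (smt (verit) divide_le_eq_1_pos power_le_one zero_le_divide_iff)
    then have "real m * \<pi>\<^sup>2 * (\<epsilon> / R)\<^sup>2 \<le> real m * \<pi>\<^sup>2 * 4" by (intro mult_left_mono) auto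
    then show ?thesis using m by (simp add: power2_eq_square field_simps)
  qed
  have eW: "-2 * (\<epsilon> * (real m * \<pi> / 2))\<^sup>2 / (real m * (R - - R)\<^sup>2) = - real m * (\<epsilon> * \<pi> / R)\<^sup>2 / 8"
    using m R by (simp add: power2_eq_square field_simps)
  show ?thesis unfolding P_def[symmetric] using union hZ hW eZ unfolding eW by linarith
qed

definition subsets_of_size :: "nat \<Rightarrow> nat \<Rightarrow> nat set set" where
  "subsets_of_size n j = {S. S \<subseteq> {..<n} \<and> card S = j}"

lemma finite_subsets_of_size [simp]: "finite (subsets_of_size n j)"
  unfolding subsets_of_size_def by (rule finite_subset[of _ "Pow {..<n}"]) auto

lemma card_subsets_of_size: "card (subsets_of_size n j) = n choose j"
  unfolding subsets_of_size_def using n_subsets[of "{..<n}" j] by simp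

lemma subsets_of_size_nonempty: "j \<le> n \<Longrightarrow> subsets_of_size n j \<noteq> {}"
proof -
  assume "j \<le> n"
  then have "{..<j} \<in> subsets_of_size n j" by (auto simp: subsets_of_size_def)
  then show ?thesis by blast
qed

lemma Dunif_eq: "Dunif n j = pmf_of_set (subsets_of_size n j)"
  unfolding Dunif_def subsets_of_size_def ..

lemma set_pmf_Dsub:
  assumes "k \<le> n" "s + 1 \<le> n"
  shows "set_pmf (Dsub n k s) \<subseteq> {S. S \<subseteq> {..<n}}"
proof -
  have "set_pmf (Dunif n j) \<subseteq> {S. S \<subseteq> {..<n}}" if "j \<le> n" for j
    using that subsets_of_size_nonempty[of j n] by (auto simp: Dunif_eq subsets_of_size_def)
  then show ?thesis using assms by (auto simp: Dsub_def)
qed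

lemma expectation_Dsub:
  fixes h :: "nat set \<Rightarrow> real"
  assumes "k \<le> n" "s + 1 \<le> n"
  shows "measure_pmf.expectation (Dsub n k s) h =
     (average (subsets_of_size n k) h + average (subsets_of_size n s) h
      + average (subsets_of_size n (s + 1)) h) / 3"
proof -
  have ne: "subsets_of_size n j \<noteq> {}" if "j \<in> {k, s, s + 1}" for j
    using that assms subsets_of_size_nonempty by auto
  have "measure_pmf.expectation (Dsub n k s) h =
    (\<Sum>r\<in>{0,1,2::nat}. measure_pmf.expectation
        (if r = 0 then Dunif n k else if r = 1 then Dunif n s else Dunif n (s+1)) h
      /\<^sub>R real (card {0,1,2::nat}))"
    unfolding Dsub_def
    by (rule pmf_expectation_bind_pmf_of_set)
       (use ne in \<open>auto simp: Dunif_eq\<close>)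
  then show ?thesis
    using ne by (simp add: Dunif_eq integral_pmf_of_set average_def field_simps)
qed

lemma expectation_Dsub_ge_average:
  fixes h :: "nat set \<Rightarrow> real"
  assumes "k \<le> n" "s + 1 \<le> n" "j \<in> {s, s + 1}" "\<forall>S. h S \<ge> 0"
  shows "measure_pmf.expectation (Dsub n k s) h \<ge> average (subsets_of_size n j) h / 3"
proof -
  have "average (subsets_of_size n j') h \<ge> 0" for j'
    using assms(4) by (simp add: average_def sum_nonneg)
  then show ?thesis using assms(3) by (auto simp: expectation_Dsub[OF assms(1,2)])
qed

lemma frequency_Dsub_ge:
  assumes "k \<le> n" "s + 1 \<le> n" "j \<in> {s, s + 1}"
    and "card (subsets_of_size n j) \<le> n * card {S \<in> subsets_of_size n j. c S}"
  shows "measure_pmf.expectation (Dsub n k s) (\<lambda>S. if c S then 1 else 0) \<ge> 1 / (3 * real n)"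
proof -
  have "(\<Sum>S\<in>subsets_of_size n j. if c S then 1 else 0 :: real) = card {S \<in> subsets_of_size n j. c S}"
    by (simp add: sum.inter_filter[symmetric])
  moreover have "card (subsets_of_size n j) > 0"
    using subsets_of_size_nonempty[of j n] assms(2,3) by (auto simp: card_gt_0_iff)
  moreover have "real (card (subsets_of_size n j)) \<le> real n * real (card {S \<in> subsets_of_size n j. c S})"
    using assms(4) by (metis of_nat_le_iff of_nat_mult)
  ultimately have "average (subsets_of_size n j) (\<lambda>S. if c S then 1 else 0) \<ge> 1 / real n"
    using assms(2) by (simp add: average_def field_simps)
  moreover have "average (subsets_of_size n j) (\<lambda>S. if c S then 1 else 0) / 3
                 \<le> measure_pmf.expectation (Dsub n k s) (\<lambda>S. if c S then 1 else 0)"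
    by (rule expectation_Dsub_ge_average[OF assms(1-3)]) simp
  ultimately show ?thesis by simp
qed

lemma centred_Dsub:
  assumes "k \<le> n" "s + 1 \<le> n" "\<forall>S. c S \<longrightarrow> card S = j"
  shows "measure_pmf.expectation (Dsub n k s)
           (\<lambda>S. if c S then f S - average {S \<in> subsets_of_size n j. c S} f else 0) = 0"
proof -
  define G where "G = {S \<in> subsets_of_size n j. c S}"
  have "{S \<in> subsets_of_size n j'. c S} = (if j' = j then G else {})" for j'
    using assms(3) by (auto simp: G_def subsets_of_size_def)
  then have "(\<Sum>S\<in>subsets_of_size n j'. if c S then f S - average G f else 0) = 0" for j'
    using sum_diff_average[of f G] by (simp add: sum.inter_filter[symmetric])
  then show ?thesis unfolding G_def[symmetric] expectation_Dsub[OF assms(1,2)] average_def by simp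
qed

lemma binomial_le_mult_binomial_diff:
  assumes "s < n"
  shows "n choose s \<le> n * ((n - 1) choose s)"
proof -
  have "n choose s \<le> (n - s) * (n choose s)" using assms by simp
  also have "\<dots> = n * ((n - 1) choose s)" by (rule binomial_absorb_comp)
  finally show ?thesis .
qed

lemma binomial_Suc_le_mult_binomial_diff: "n choose Suc s \<le> n * ((n - 1) choose s)"
proof -
  have "n choose Suc s \<le> Suc s * (n choose Suc s)" by simp
  also have "\<dots> = n * ((n - 1) choose s)" by (rule binomial_absorption)
  finally show ?thesis .
qed

lemma card_subsets_without:
  assumes "i < n"
  shows "card {S \<in> subsets_of_size n s. i \<notin> S} = (n - 1) choose s"
proof -
  have "{S \<in> subsets_of_size n s. i \<notin> S} = {S. S \<subseteq> {..<n} - {i} \<and> card S = s}"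
    by (auto simp: subsets_of_size_def)
  then show ?thesis using n_subsets[of "{..<n} - {i}" s] assms by simp
qed

lemma bij_betw_insert_subsets:
  assumes "i < n"
  shows "bij_betw (insert i) {S \<in> subsets_of_size n s. i \<notin> S} {T \<in> subsets_of_size n (s + 1). i \<in> T}"
proof (rule bij_betwI[where g = "\<lambda>T. T - {i}"])
  show "insert i \<in> {S \<in> subsets_of_size n s. i \<notin> S} \<rightarrow> {T \<in> subsets_of_size n (s + 1). i \<in> T}"
    using assms by (auto simp: subsets_of_size_def finite_subset)
  show "(\<lambda>T. T - {i}) \<in> {T \<in> subsets_of_size n (s + 1). i \<in> T} \<rightarrow> {S \<in> subsets_of_size n s. i \<notin> S}"
    by (auto simp: subsets_of_size_def finite_subset)
qed (auto simp: subsets_of_size_def)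

lemma card_subsets_with:
  "i < n \<Longrightarrow> card {T \<in> subsets_of_size n (s + 1). i \<in> T} = (n - 1) choose s"
  using bij_betw_same_card[OF bij_betw_insert_subsets] card_subsets_without by fastforce

lemma cond_marg_eq_average_diff:
  assumes "i < n"
  shows "cond_marg f n s i = average {T \<in> subsets_of_size n (s + 1). i \<in> T} f
                           - average {S \<in> subsets_of_size n s. i \<notin> S} f"
proof -
  have "cond_marg f n s i = average {S \<in> subsets_of_size n s. i \<notin> S} (\<lambda>S. f (insert i S) - f S)"
    by (simp add: cond_marg_def marg_def average_def subsets_of_size_def conj_assoc Let_def)
  moreover have "(\<Sum>S\<in>{S \<in> subsets_of_size n s. i \<notin> S}. f (insert i S))
               = (\<Sum>T\<in>{T \<in> subsets_of_size n (s + 1). i \<in> T}. f T)"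
    using sum.reindex_bij_betw[OF bij_betw_insert_subsets[OF assms]] .
  ultimately show ?thesis
    using card_subsets_with[OF assms] card_subsets_without[OF assms]
    by (simp add: average_def sum_subtractf diff_divide_distrib)
qed

lemma monotone_range:
  fixes f :: "nat set \<Rightarrow> real"
  assumes "\<forall>A B. A \<subseteq> B \<longrightarrow> B \<subseteq> {..<n} \<longrightarrow> f A \<le> f B" "f {} \<ge> 0" "S \<subseteq> {..<n}"
  shows "f S \<in> {0..f {..<n}}"
  using assms by (metis atLeastAtMost_iff empty_subsetI order_refl order_trans)

lemma class_average_concentration:
  fixes f :: "nat set \<Rightarrow> real"
  assumes kn: "k \<le> n" and sn: "s + 1 \<le> n" and j: "j \<in> {s, s + 1}" and c: "\<forall>S. c S \<longrightarrow> card S = j"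
    and large: "card (subsets_of_size n j) \<le> n * card {S \<in> subsets_of_size n j. c S}"
    and range: "\<forall>S. S \<subseteq> {..<n} \<longrightarrow> f S \<in> {0..M}"
    and m: "m > 0" and \<epsilon>: "\<epsilon> > 0"
  shows "measure_pmf.prob (Pi_pmf {..<m} dd (\<lambda>_. Dsub n k s))
           {x. \<bar>average (hits x m c) (\<lambda>t. f (x t)) - average {S \<in> subsets_of_size n j. c S} f\<bar> > \<epsilon>}
         \<le> 4 * exp (- real m * (\<epsilon> / (3 * real n) / (M + \<epsilon>))\<^sup>2 / 8)"
proof -
  define G where "G = {S \<in> subsets_of_size n j. c S}"
  have "card (subsets_of_size n j) > 0"
    using subsets_of_size_nonempty[of j n] j sn by (auto simp: card_gt_0_iff)
  then have "0 < n * card G" using large unfolding G_def by linarith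
  then have "card G \<noteq> 0" by (metis mult_0_right less_irrefl)
  then have "finite G" "G \<noteq> {}" by (auto simp: G_def)
  then have \<mu>: "average G f \<in> {0..M}"
    by (rule average_mem_atLeastAtMost) (use range in \<open>auto simp: G_def subsets_of_size_def\<close>)
  have "measure_pmf.prob (Pi_pmf {..<m} dd (\<lambda>_. Dsub n k s))
           {x. \<bar>average (hits x m c) (\<lambda>t. f (x t)) - average G f\<bar> > \<epsilon>}
         \<le> 4 * exp (- real m * (\<epsilon> * (1 / (3 * real n)) / (M + \<epsilon>))\<^sup>2 / 8)"
  proof (rule average_hits_concentration[OF m])
    have "\<bar>f S - average G f\<bar> \<le> M + \<epsilon>" if "S \<in> set_pmf (Dsub n k s)" for S
      using set_pmf_Dsub[OF kn sn] that range[rule_format, of S] \<mu> \<epsilon> by (auto simp: abs_le_iff)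
    then show "\<forall>S\<in>set_pmf (Dsub n k s). c S \<longrightarrow> \<bar>f S - average G f\<bar> \<le> M + \<epsilon>" by blast
    show "measure_pmf.expectation (Dsub n k s) (\<lambda>S. if c S then 1 else 0) \<ge> 1 / (3 * real n)"
      by (rule frequency_Dsub_ge[OF kn sn j large])
    show "measure_pmf.expectation (Dsub n k s) (\<lambda>S. if c S then f S - average G f else 0) = 0"
      unfolding G_def by (rule centred_Dsub[OF kn sn c])
  qed (use sn \<epsilon> \<mu> in auto)
  then show ?thesis by (simp add: G_def)
qed

lemma sample_size_exponent_bound:
  fixes n m P M \<epsilon> :: real
  assumes n: "n > 0" and \<epsilon>: "\<epsilon> > 0" and M: "M \<ge> 0" and MP: "M \<le> 2 * P * \<epsilon>"
    and m: "m \<ge> 144 * n ^ 3 * (2 * P + 1)\<^sup>2"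
  shows "2 * n \<le> m * (\<epsilon> / (3 * n) / (M + \<epsilon>))\<^sup>2 / 8"
proof -
  define r where "r = (\<epsilon> / (M + \<epsilon>))\<^sup>2"
  have "1 \<le> (2 * P + 1) * (\<epsilon> / (M + \<epsilon>))" using MP \<epsilon> M by (simp add: field_simps)
  then have "1 \<le> (2 * P + 1)\<^sup>2 * r"
    unfolding r_def by (metis one_le_power power_mult_distrib)
  then have "144 * n ^ 3 \<le> 144 * n ^ 3 * ((2 * P + 1)\<^sup>2 * r)"
    using n by simp
  also have "\<dots> \<le> m * r"
    using m by (simp add: r_def mult.assoc[symmetric] mult_right_mono)
  finally have "144 * n ^ 3 / (72 * n ^ 2) \<le> m * r / (72 * n ^ 2)"
    by (rule divide_right_mono) simp
  moreover have "144 * n ^ 3 / (72 * n ^ 2) = 2 * n"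
    using n by (simp add: power2_eq_square power3_eq_cube)
  moreover have "m * r / (72 * n ^ 2) = m * (\<epsilon> / (3 * n) / (M + \<epsilon>))\<^sup>2 / 8"
    by (simp add: r_def power_divide power_mult_distrib)
  ultimately show ?thesis by simp
qed

lemma vhat_eq_average_diff:
  "vhat f x m s i = average (hits x m (\<lambda>S. i \<in> S \<and> card S = s + 1)) (\<lambda>t. f (x t))
                  - average (hits x m (\<lambda>S. i \<notin> S \<and> card S = s)) (\<lambda>t. f (x t))"
  by (simp add: vhat_def average_def hits_def Sin_def Sout_def)

lemma estimate_fails_rarely:
  fixes f :: "nat set \<Rightarrow> real"
  assumes kn: "k \<le> n" and sn: "s + 1 \<le> n" and i: "i < n"
    and range: "\<forall>S. S \<subseteq> {..<n} \<longrightarrow> f S \<in> {0..M}"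
    and \<epsilon>: "\<epsilon> > 0" and MP: "M \<le> P * \<epsilon>" and m: "real m \<ge> 144 * real n ^ 3 * (2 * P + 1)\<^sup>2"
  shows "measure_pmf.prob (Pi_pmf {..<m} dd (\<lambda>_. Dsub n k s))
           {x. \<bar>vhat f x m s i - cond_marg f n s i\<bar> > \<epsilon>} \<le> 8 * exp (- 2 * real n)"
proof -
  define Q where "Q = Pi_pmf {..<m} dd (\<lambda>_. Dsub n k s)"
  define cin :: "nat set \<Rightarrow> bool" where "cin = (\<lambda>S. i \<in> S \<and> card S = s + 1)"
  define cout :: "nat set \<Rightarrow> bool" where "cout = (\<lambda>S. i \<notin> S \<and> card S = s)"
  define err where "err c j x = \<bar>average (hits x m c) (\<lambda>t. f (x t))
                                  - average {S \<in> subsets_of_size n j. c S} f\<bar>" for c j x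
  have in_class: "{S \<in> subsets_of_size n (s + 1). cin S} = {T \<in> subsets_of_size n (s + 1). i \<in> T}"
    and out_class: "{S \<in> subsets_of_size n s. cout S} = {S \<in> subsets_of_size n s. i \<notin> S}"
    by (auto simp: cin_def cout_def subsets_of_size_def)
  have n: "real n > 0" and M: "M \<ge> 0" using sn range by auto
  have "0 \<le> P * \<epsilon>" using MP M by linarith
  then have "P \<ge> 0" using \<epsilon> by (simp add: zero_le_mult_iff)
  then have "0 < 144 * real n ^ 3 * (2 * P + 1)\<^sup>2" using n by simp
  then have m0: "m > 0" using m by linarith
  have "exp (- real m * (\<epsilon> / 2 / (3 * real n) / (M + \<epsilon> / 2))\<^sup>2 / 8) \<le> exp (- 2 * real n)"
    using sample_size_exponent_bound[of "real n" "\<epsilon> / 2" M P "real m"] n \<epsilon> M MP m by simp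
  moreover have "measure_pmf.prob Q {x. err cin (s + 1) x > \<epsilon> / 2}
                   \<le> 4 * exp (- real m * (\<epsilon> / 2 / (3 * real n) / (M + \<epsilon> / 2))\<^sup>2 / 8)"
  proof -
    have "card (subsets_of_size n (s + 1)) \<le> n * card {S \<in> subsets_of_size n (s + 1). cin S}"
      unfolding in_class card_subsets_with[OF i] card_subsets_of_size
      using binomial_Suc_le_mult_binomial_diff[of n s] by simp
    then show ?thesis unfolding Q_def err_def
      by (intro class_average_concentration[OF kn sn _ _ _ range m0]) (use \<epsilon> in \<open>auto simp: cin_def\<close>)
  qed
  moreover have "measure_pmf.prob Q {x. err cout s x > \<epsilon> / 2}
                   \<le> 4 * exp (- real m * (\<epsilon> / 2 / (3 * real n) / (M + \<epsilon> / 2))\<^sup>2 / 8)"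
  proof -
    have "card (subsets_of_size n s) \<le> n * card {S \<in> subsets_of_size n s. cout S}"
      unfolding out_class card_subsets_without[OF i] card_subsets_of_size
      using binomial_le_mult_binomial_diff[of s n] sn by simp
    then show ?thesis unfolding Q_def err_def
      by (intro class_average_concentration[OF kn sn _ _ _ range m0]) (use \<epsilon> in \<open>auto simp: cout_def\<close>)
  qed
  moreover have "{x. \<bar>vhat f x m s i - cond_marg f n s i\<bar> > \<epsilon>}
                   \<subseteq> {x. err cin (s + 1) x > \<epsilon> / 2} \<union> {x. err cout s x > \<epsilon> / 2}"
  proof
    fix x assume "x \<in> {x. \<bar>vhat f x m s i - cond_marg f n s i\<bar> > \<epsilon>}"
    moreover have "vhat f x m s i - cond_marg f n s i
          = (average (hits x m cin) (\<lambda>t. f (x t)) - average {S \<in> subsets_of_size n (s + 1). cin S} f)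
          - (average (hits x m cout) (\<lambda>t. f (x t)) - average {S \<in> subsets_of_size n s. cout S} f)"
      unfolding vhat_eq_average_diff cond_marg_eq_average_diff[OF i] in_class out_class
      by (simp add: cin_def cout_def)
    ultimately show "x \<in> {x. err cin (s + 1) x > \<epsilon> / 2} \<union> {x. err cout s x > \<epsilon> / 2}"
      unfolding err_def mem_Collect_eq Un_iff by linarith
  qed
  then have "measure_pmf.prob Q {x. \<bar>vhat f x m s i - cond_marg f n s i\<bar> > \<epsilon>}
               \<le> measure_pmf.prob Q {x. err cin (s + 1) x > \<epsilon> / 2} + measure_pmf.prob Q {x. err cout s x > \<epsilon> / 2}"
    by (intro order_trans[OF measure_pmf.finite_measure_mono measure_Un_le]) auto
  ultimately show ?thesis unfolding Q_def by linarith
qed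

lemma estimates_exact_if_vanishing:
  fixes f :: "nat set \<Rightarrow> real"
  assumes "k \<le> n" "s + 1 \<le> n" "\<forall>S. S \<subseteq> {..<n} \<longrightarrow> f S = 0" "\<epsilon> \<ge> 0"
  shows "measure_pmf.prob (Pi_pmf {..<m} {} (\<lambda>_. Dsub n k s))
           {x. \<forall>i<n. \<bar>vhat f x m s i - cond_marg f n s i\<bar> \<le> \<epsilon>} = 1"
proof -
  have "\<forall>t<m. x t \<subseteq> {..<n}" if "x \<in> set_pmf (Pi_pmf {..<m} {} (\<lambda>_. Dsub n k s))" for x
    using that set_Pi_pmf_subset'[of "{..<m}" "{}" "\<lambda>_. Dsub n k s"] set_pmf_Dsub[OF assms(1,2)]
    by (auto simp: PiE_dflt_def)
  moreover have "vhat f x m s i = 0" if "\<forall>t<m. x t \<subseteq> {..<n}" for x i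
    using that assms(3) by (simp add: vhat_def Sin_def Sout_def)
  moreover have "cond_marg f n s i = 0" if "i < n" for i
    using that assms(3) by (simp add: cond_marg_def marg_def Let_def)
  ultimately show ?thesis
    using assms(4) by (subst measure_pmf.prob_eq_1) (auto simp: AE_measure_pmf_iff)
qed

lemma estimates_accurate_whp:
  fixes f :: "nat set \<Rightarrow> real"
  assumes kn: "k \<le> n" and sn: "s + 1 \<le> n"
    and mono: "\<forall>A B. A \<subseteq> B \<longrightarrow> B \<subseteq> {..<n} \<longrightarrow> f A \<le> f B" and f0: "f {} \<ge> 0"
    and P: "P > 0" and \<epsilon>P: "f {..<n} \<le> P * \<epsilon>"
    and m: "real m \<ge> 144 * real n ^ 3 * (2 * P + 1)\<^sup>2"
  shows "measure_pmf.prob (Pi_pmf {..<m} {} (\<lambda>_. Dsub n k s))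
           {x. \<forall>i<n. \<bar>vhat f x m s i - cond_marg f n s i\<bar> \<le> \<epsilon>}
         \<ge> 1 - 8 * exp (- real n)"
proof -
  define Q where "Q = Pi_pmf {..<m} {} (\<lambda>_. Dsub n k s)"
  define Good where "Good = {x. \<forall>i<n. \<bar>vhat f x m s i - cond_marg f n s i\<bar> \<le> \<epsilon>}"
  define Fail where "Fail i = {x. \<bar>vhat f x m s i - cond_marg f n s i\<bar> > \<epsilon>}" for i
  have range: "\<forall>S. S \<subseteq> {..<n} \<longrightarrow> f S \<in> {0..f {..<n}}"
    using monotone_range[OF mono f0] by blast
  then have "0 \<le> P * \<epsilon>" using \<epsilon>P by (metis atLeastAtMost_iff order_refl order_trans)
  then have \<epsilon>: "\<epsilon> \<ge> 0" using P by (simp add: zero_le_mult_iff)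
  show ?thesis
  proof (cases "\<epsilon> = 0")
    case True
    then have "f {..<n} \<le> 0" using \<epsilon>P by simp
    then have "\<forall>S. S \<subseteq> {..<n} \<longrightarrow> f S = 0"
      using range by (meson atLeastAtMost_iff order_antisym order_trans)
    then show ?thesis using estimates_exact_if_vanishing[OF kn sn _ \<epsilon>] by simp
  next
    case False
    then have "\<epsilon> > 0" using \<epsilon> by simp
    have "measure_pmf.prob Q (- Good) \<le> measure_pmf.prob Q (\<Union>i<n. Fail i)"
      by (intro measure_pmf.finite_measure_mono) (auto simp: Good_def Fail_def)
    also have "\<dots> \<le> (\<Sum>i<n. measure_pmf.prob Q (Fail i))"
      by (rule measure_UNION_le) auto
    also have "\<dots> \<le> (\<Sum>i<n. 8 * exp (- 2 * real n))"
      unfolding Q_def Fail_def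
      by (intro sum_mono estimate_fails_rarely[OF kn sn _ range \<open>\<epsilon> > 0\<close> \<epsilon>P m]) simp
    also have "\<dots> = 8 * exp (- real n) * (real n * exp (- real n))"
      by (simp add: exp_add[symmetric])
    also have "\<dots> \<le> 8 * exp (- real n)"
    proof -
      have "real n \<le> exp (real n)" using exp_ge_add_one_self[of "real n"] by linarith
      then show ?thesis by (simp add: exp_minus field_simps)
    qed
    finally show ?thesis
      using measure_pmf.prob_compl[of Good Q] by (simp add: Q_def Good_def Compl_eq_Diff_UNIV)
  qed
qed

lemma Suc_le_square: "2 \<le> (s::nat)\<^sup>2 \<Longrightarrow> s + 1 \<le> s\<^sup>2"
  by (cases "s \<le> 1") (auto simp: power2_eq_square le_Suc_eq intro: le_trans[OF _ mult_le_mono1[of 2 s s]])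

theorem lemma19:
  fixes p :: "real poly"
  assumes p_pos: "\<forall>n::nat. n \<ge> 1 \<longrightarrow> poly p (real n) > 0"
  shows "\<exists>(q :: real poly) (C :: real).
    \<forall>(s::nat) (n::nat) (k::nat) (f :: nat set \<Rightarrow> real) (\<epsilon>::real) (m::nat).
      n = s^2 \<longrightarrow> 1 \<le> k \<longrightarrow> k \<le> n \<longrightarrow>
      (\<forall>A B. A \<subseteq> B \<longrightarrow> B \<subseteq> {..<n} \<longrightarrow> f A \<le> f B) \<longrightarrow>
      f {} \<ge> 0 \<longrightarrow>
      \<epsilon> \<ge> f {..<n} / poly p (real n) \<longrightarrow>
      real m \<ge> poly q (real n) \<longrightarrow>
      measure_pmf.prob (Pi_pmf {..<m} {} (\<lambda>_. Dsub n k s))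
        {smp. \<forall>i<n. \<bar>vhat f smp m s i - cond_marg f n s i\<bar> \<le> \<epsilon>}
        \<ge> 1 - C * exp (- real n)"
proof (intro exI allI impI)
  fix s n k m :: nat and f :: "nat set \<Rightarrow> real" and \<epsilon> :: real
  assume ns: "n = s^2" and "1 \<le> k" and kn: "k \<le> n"
    and mono: "\<forall>A B. A \<subseteq> B \<longrightarrow> B \<subseteq> {..<n} \<longrightarrow> f A \<le> f B" and f0: "f {} \<ge> 0"
    and \<epsilon>P: "\<epsilon> \<ge> f {..<n} / poly p (real n)"
    and m: "real m \<ge> poly (smult 144 ([:0, 0, 0, 1:] * (smult 2 p + 1)\<^sup>2)) (real n)"
  define P where "P = poly p (real n)"
  show "measure_pmf.prob (Pi_pmf {..<m} {} (\<lambda>_. Dsub n k s))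
          {x. \<forall>i<n. \<bar>vhat f x m s i - cond_marg f n s i\<bar> \<le> \<epsilon>} \<ge> 1 - 8 * exp (- real n)"
  proof (cases "n \<le> 1")
    case True
    then have "exp (real n) \<le> exp 1" by simp
    then have "exp (real n) \<le> 8" using exp_le by linarith
    then have "1 \<le> 8 * exp (- real n)" by (simp add: exp_minus field_simps)
    then show ?thesis by (intro order_trans[OF _ measure_nonneg]) simp
  next
    case False
    then have sn: "s + 1 \<le> n" using ns Suc_le_square by simp
    have P: "P > 0" using p_pos False by (simp add: P_def)
    have "f {..<n} \<le> P * \<epsilon>" using \<epsilon>P P by (simp add: P_def divide_le_eq mult.commute)
    moreover have "real m \<ge> 144 * real n ^ 3 * (2 * P + 1)\<^sup>2"
      using m by (simp add: P_def power3_eq_cube)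
    ultimately show ?thesis by (rule estimates_accurate_whp[OF kn sn mono f0 P])
  qed
qed

end
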